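(* Let $(X,\mathcal E_X)$ be a ballean. If $\operatorname{cof}_\star(\mathcal E_X)\le\operatorname{add}(\mathcal B_X)$, then $X$ is normal.
   Context: A ballean is a pair $(X,\mathcal E_X)$ where $X$ is a set and $\mathcal E_X$ is a family of subsets of $X\times X$ (called entourages) such that: each $E\in\mathcal E_X$ contains the diagonal $\Delta_X=\{(x,x):x\in X\}$; for any $E,F\in\mathcal E_X$ there is $D\in\mathcal E_X$ with $E\circ F^{-1}\subset D$, where $E\circ F=\{(x,z):\exists y\ (x,y)\in E,\ (y,z)\in F\}$ and $F^{-1}=\{(y,x):(x,y)\in F\}$; and $\bigcup\mathcal E_X=X\times X$. For $E\in\mathcal E_X$, $x\in X$, $A\subset X$ put $E[x]=\{y:(x,y)\in E\}$ and $E[A]=\bigcup_{a\in A}E[a]$. A set $B\subset X$ is bounded if $B\subset E[x]$ for some $E\in\mathcal E_X$, $x\in X$; $\mathcal B_X$ denotes the family of bounded sets (the bornology). Sets $A,B\subset X$ are asymptotically disjoint if $E[A]\cap E[B]\in\mathcal B_X$ for all $E\in\mathcal E_X$; $U\subset X$ is an asymptotic neighborhood of $A$ if $E[A]\setminus U\in\mathcal B_X$ for all $E\in\mathcal E_X$. $X$ is normal if any two asymptotically disjoint sets have disjoint asymptotic neighborhoods. For a partially ordered set $P$: $\operatorname{add}(P)$ is the smallest cardinality of a subset of $P$ having no upper bound in $P$, and $\operatorname{cof}(P)$ is the smallest cardinality of a cofinal subset of $P$; if $P$ has a largest element, put $\operatorname{add}(P)=\operatorname{cof}(P)=1$. $\mathcal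 B_X$ is ordered by inclusion. For $A\subset X$, $\operatorname{cof}_*(\mathcal E_X[A])$ is the smallest cardinality of a subfamily $\mathcal C\subset\mathcal E_X$ such that for every $E\in\mathcal E_X$ there is $C\in\mathcal C$ with $E[A]\setminus C[A]\in\mathcal B_X$; and $\operatorname{cof}_\star(\mathcal E_X)=\sup_{A\subset X}\operatorname{cof}_*(\mathcal E_X[A])$. *)

theory Defs
  imports Main
begin

text \<open>A ballean on the carrier X with family of entourages \<E>.
  E[x] is rendered as E `` {x}, E[A] as E `` A; relcomp (O) is the composition of the paper.\<close>

definition ballean :: "'a set \<Rightarrow> ('a \<times> 'a) set set \<Rightarrow> bool" where
  "ballean X \<E> \<longleftrightarrow>
     (\<forall>E\<in>\<E>. E \<subseteq> X \<times> X \<and> Id_on X \<subseteq> E) \<and>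
     (\<forall>E\<in>\<E>. \<forall>F\<in>\<E>. \<exists>D\<in>\<E>. E O F\<inverse> \<subseteq> D) \<and>
     \<Union>\<E> = X \<times> X"

definition bounded_set :: "'a set \<Rightarrow> ('a \<times> 'a) set set \<Rightarrow> 'a set \<Rightarrow> bool" where
  "bounded_set X \<E> B \<longleftrightarrow> (\<exists>E\<in>\<E>. \<exists>x\<in>X. B \<subseteq> E `` {x})"

definition bornology :: "'a set \<Rightarrow> ('a \<times> 'a) set set \<Rightarrow> 'a set set" where
  "bornology X \<E> = {B. bounded_set X \<E> B}"

definition asymp_disjoint :: "'a set \<Rightarrow> ('a \<times> 'a) set set \<Rightarrow> 'a set \<Rightarrow> 'a set \<Rightarrow> bool" where
  "asymp_disjoint X \<E> A B \<longleftrightarrow> (\<forall>E\<in>\<E>. bounded_set X \<E> (E `` A \<inter> E `` B))"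

definition asymp_nbhd :: "'a set \<Rightarrow> ('a \<times> 'a) set set \<Rightarrow> 'a set \<Rightarrow> 'a set \<Rightarrow> bool" where
  "asymp_nbhd X \<E> U A \<longleftrightarrow> (\<forall>E\<in>\<E>. bounded_set X \<E> (E `` A - U))"

definition normal_ballean :: "'a set \<Rightarrow> ('a \<times> 'a) set set \<Rightarrow> bool" where
  "normal_ballean X \<E> \<longleftrightarrow>
     (\<forall>A B. A \<subseteq> X \<longrightarrow> B \<subseteq> X \<longrightarrow> asymp_disjoint X \<E> A B \<longrightarrow>
        (\<exists>U V. U \<subseteq> X \<and> V \<subseteq> X \<and> asymp_nbhd X \<E> U A \<and> asymp_nbhd X \<E> V B \<and> U \<inter> V = {}))"

definition has_upper_bound :: "'a set set \<Rightarrow> 'a set set \<Rightarrow> bool" where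
  "has_upper_bound P F \<longleftrightarrow> (\<exists>U\<in>P. \<forall>S\<in>F. S \<subseteq> U)"

definition has_largest :: "'a set set \<Rightarrow> bool" where
  "has_largest P \<longleftrightarrow> (\<exists>L\<in>P. \<forall>S\<in>P. S \<subseteq> L)"

text \<open>|C| \<le> add(P), for a set C of arbitrary type, with add(P) = 1 if P has a largest
  element and otherwise the least cardinality of a subfamily of P without upper bound in P.
  Since cardinals are well ordered, |C| \<le> add(P) iff |C| \<le> |F| for every such subfamily F.\<close>
definition card_le_add :: "'b set \<Rightarrow> 'a set set \<Rightarrow> bool" where
  "card_le_add C P \<longleftrightarrow>
     (if has_largest P then (card_of C, card_of {()}) \<in> ordLeq
      else (\<forall>F. F \<subseteq> P \<longrightarrow> \<not> has_upper_bound P F \<longrightarrow> (card_of C, card_of F) \<in> ordLeq))"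

text \<open>C \<subseteq> \<E> witnesses cof_*(\<E>[A]): for every E there is C' \<in> C with E[A] \ C'[A] bounded.\<close>
definition cof_star_witness :: "'a set \<Rightarrow> ('a \<times> 'a) set set \<Rightarrow> 'a set \<Rightarrow> ('a \<times> 'a) set set \<Rightarrow> bool" where
  "cof_star_witness X \<E> A \<C> \<longleftrightarrow>
     \<C> \<subseteq> \<E> \<and> (\<forall>E\<in>\<E>. \<exists>C\<in>\<C>. bounded_set X \<E> (E `` A - C `` A))"

text \<open>cof_\<star>(\<E>_X) \<le> add(\<B>_X): for every A \<subseteq> X, cof_*(\<E>[A]) \<le> add(\<B>_X), i.e. (cof_* being a
  minimum cardinality) some witness family has cardinality \<le> add(\<B>_X).\<close>
definition cof_star_le_add :: "'a set \<Rightarrow> ('a \<times> 'a) set set \<Rightarrow> bool" where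
  "cof_star_le_add X \<E> \<longleftrightarrow>
     (\<forall>A. A \<subseteq> X \<longrightarrow> (\<exists>\<C>. cof_star_witness X \<E> A \<C> \<and> card_le_add \<C> (bornology X \<E>)))"

end

theory Submission imports Defs begin

text \<open>If the bornology has a largest element, then X itself is bounded and the pair X, {}
  separates any two sets. Otherwise every family of fewer than add(\<B>_X) bounded sets has a
  bounded upper bound. Index cofinal witnesses C_j for A and D_j for B by one well-ordered set J
  of cardinality at most add(\<B>_X). The sets C_j[A] \<inter> D_l[B] are bounded by asymptotic
  disjointness, and a transfinite bookkeeping assigns to each j a bounded set B_j absorbing
  C_j[A] \<inter> D_l[B] and C_l[A] \<inter> D_j[B] for all l \<le> j. Then
  U = \<Union>_j (C_j[A] - B_j) and V = \<Union>_j (D_j[B] - B_j) are disjoint asymptotic neighbourhoods.\<close>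

unbundle cardinal_syntax

lemma ballean_subset: "ballean X \<E> \<Longrightarrow> E \<in> \<E> \<Longrightarrow> E \<subseteq> X \<times> X"
  unfolding ballean_def by simp

lemma ballean_refl: "ballean X \<E> \<Longrightarrow> E \<in> \<E> \<Longrightarrow> x \<in> X \<Longrightarrow> (x, x) \<in> E"
  unfolding ballean_def by auto

lemma ballean_converse_relcomp_dominated:
  "ballean X \<E> \<Longrightarrow> E \<in> \<E> \<Longrightarrow> F \<in> \<E> \<Longrightarrow> \<exists>D\<in>\<E>. E O F\<inverse> \<subseteq> D"
  unfolding ballean_def by simp

lemma ballean_covers: "ballean X \<E> \<Longrightarrow> x \<in> X \<Longrightarrow> y \<in> X \<Longrightarrow> \<exists>G\<in>\<E>. (x, y) \<in> G"
  unfolding ballean_def by (metis SigmaI UnionE)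

lemma ballean_Image_subset: "ballean X \<E> \<Longrightarrow> E \<in> \<E> \<Longrightarrow> E `` Y \<subseteq> X"
  using ballean_subset by blast

lemma ballean_converse_dominated:
  assumes b: "ballean X \<E>" and F: "F \<in> \<E>"
  shows "\<exists>H\<in>\<E>. F\<inverse> \<subseteq> H"
proof -
  obtain H where H: "H \<in> \<E>" "F O F\<inverse> \<subseteq> H"
    using ballean_converse_relcomp_dominated[OF b F F] by blast
  have "F\<inverse> \<subseteq> F O F\<inverse>"
    using ballean_subset[OF b F] ballean_refl[OF b F] by blast
  then show ?thesis using H by blast
qed

lemma ballean_relcomp_dominated:
  assumes b: "ballean X \<E>" and E: "E \<in> \<E>" and F: "F \<in> \<E>"
  shows "\<exists>D\<in>\<E>. E O F \<subseteq> D"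
proof -
  obtain H where H: "H \<in> \<E>" "F\<inverse> \<subseteq> H"
    using ballean_converse_dominated[OF b F] by blast
  obtain D where D: "D \<in> \<E>" "E O H\<inverse> \<subseteq> D"
    using ballean_converse_relcomp_dominated[OF b E H(1)] by blast
  have "E O F \<subseteq> E O H\<inverse>" using H(2) by blast
  then show ?thesis using D by blast
qed

lemma ballean_Un_dominated:
  assumes b: "ballean X \<E>" and E: "E \<in> \<E>" and F: "F \<in> \<E>"
  shows "\<exists>D\<in>\<E>. E \<union> F \<subseteq> D"
proof -
  obtain D where D: "D \<in> \<E>" "E O F \<subseteq> D"
    using ballean_relcomp_dominated[OF b E F] by blast
  have "E \<union> F \<subseteq> E O F"
    using ballean_subset[OF b E] ballean_subset[OF b F]
      ballean_refl[OF b E] ballean_refl[OF b F] by blast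
  then show ?thesis using D by blast
qed

lemma bounded_set_subset: "bounded_set X \<E> B \<Longrightarrow> B' \<subseteq> B \<Longrightarrow> bounded_set X \<E> B'"
  unfolding bounded_set_def by blast

lemma bounded_set_singleton:
  assumes b: "ballean X \<E>" and x: "x \<in> X"
  shows "bounded_set X \<E> {x}"
  using ballean_covers[OF b x x] x unfolding bounded_set_def by blast

lemma bounded_set_Un:
  assumes b: "ballean X \<E>" and B1: "bounded_set X \<E> B1" and B2: "bounded_set X \<E> B2"
  shows "bounded_set X \<E> (B1 \<union> B2)"
proof -
  obtain E x where E: "E \<in> \<E>" "x \<in> X" "B1 \<subseteq> E `` {x}"
    using B1 unfolding bounded_set_def by blast
  obtain F y where F: "F \<in> \<E>" "y \<in> X" "B2 \<subseteq> F `` {y}"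
    using B2 unfolding bounded_set_def by blast
  obtain G where G: "G \<in> \<E>" "(x, y) \<in> G"
    using ballean_covers[OF b E(2) F(2)] by blast
  obtain K where K: "K \<in> \<E>" "G O F \<subseteq> K"
    using ballean_relcomp_dominated[OF b G(1) F(1)] by blast
  obtain D where D: "D \<in> \<E>" "E \<union> K \<subseteq> D"
    using ballean_Un_dominated[OF b E(1) K(1)] by blast
  have "B1 \<union> B2 \<subseteq> D `` {x}"
    using E(3) F(3) G(2) K(2) D(2) by blast
  then show ?thesis unfolding bounded_set_def using D(1) E(2) by blast
qed

lemma bounded_set_Image_Int_if_asymp_disjoint:
  assumes b: "ballean X \<E>" and AB: "asymp_disjoint X \<E> A B"
    and C: "C \<in> \<E>" and D: "D \<in> \<E>"
  shows "bounded_set X \<E> (C `` A \<inter> D `` B)"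
proof -
  obtain M where M: "M \<in> \<E>" "C \<union> D \<subseteq> M"
    using ballean_Un_dominated[OF b C D] by blast
  have "bounded_set X \<E> (M `` A \<inter> M `` B)"
    using AB M(1) unfolding asymp_disjoint_def by blast
  then show ?thesis
    by (rule bounded_set_subset) (use M(2) in blast)
qed

lemma bounded_carrier_if_has_largest:
  assumes b: "ballean X \<E>" and L: "has_largest (bornology X \<E>)"
  shows "bounded_set X \<E> X"
proof -
  obtain L where L: "bounded_set X \<E> L" "\<And>S. bounded_set X \<E> S \<Longrightarrow> S \<subseteq> L"
    using L unfolding has_largest_def bornology_def by auto
  have "X \<subseteq> L"
    using L(2) bounded_set_singleton[OF b] by blast
  then show ?thesis using L(1) bounded_set_subset by blast
qed

lemma normal_ballean_if_bounded_carrier: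
  assumes b: "ballean X \<E>" and XB: "bounded_set X \<E> X"
  shows "normal_ballean X \<E>"
proof -
  have "asymp_nbhd X \<E> U A" for U A
    unfolding asymp_nbhd_def
  proof
    fix E assume "E \<in> \<E>"
    then have "E `` A - U \<subseteq> X" using ballean_Image_subset[OF b] by blast
    then show "bounded_set X \<E> (E `` A - U)" by (rule bounded_set_subset[OF XB])
  qed
  then show ?thesis unfolding normal_ballean_def by (metis Int_empty_right empty_subsetI)
qed

lemma has_upper_bound_if_card_less_add:
  assumes "card_le_add C P" and "\<not> has_largest P" and "F \<subseteq> P" and "|F| <o |C|"
  shows "has_upper_bound P F"
proof (rule ccontr)
  assume "\<not> has_upper_bound P F"
  then have "|C| \<le>o |F|" using assms(1-3) unfolding card_le_add_def by simp
  then show False using assms(4) not_ordLeq_ordLess by blast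
qed

lemma exists_common_surjective_index:
  assumes "A \<noteq> {}" and "B \<noteq> {}"
  shows "\<exists>J f g. (J = A \<or> J = B) \<and> f ` J = A \<and> g ` J = B"
proof (cases "|B| \<le>o |A|")
  case True
  then obtain g where "g ` A = B"
    using card_of_ordLeq2[OF assms(2), of A] by blast
  then have "id ` A = A \<and> g ` A = B" by simp
  then show ?thesis by blast
next
  case False
  then have "|A| \<le>o |B|"
    using ordLeq_total[OF card_of_Well_order card_of_Well_order, of A B] by simp
  then obtain f where "f ` B = A"
    using card_of_ordLeq2[OF assms(1), of B] by blast
  then have "f ` B = A \<and> id ` B = B" by simp
  then show ?thesis by blast
qed

lemma exists_diagonal_bounds:
  assumes small: "\<And>F. F \<subseteq> P \<Longrightarrow> |F| <o |J| \<Longrightarrow> has_upper_bound P F"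
    and Un: "\<And>a b. a \<in> P \<Longrightarrow> b \<in> P \<Longrightarrow> a \<union> b \<in> P"
    and S: "\<And>j l. j \<in> J \<Longrightarrow> l \<in> J \<Longrightarrow> S j l \<in> P"
  shows "\<exists>Bd. \<forall>j\<in>J. Bd j \<in> P \<and> (\<forall>l\<in>J. S j l \<subseteq> Bd j \<union> Bd l)"
proof -
  let ?r = "|J|"
  have field: "Field ?r = J" by (rule Field_card_of)
  have below: "underS ?r j \<subseteq> J" for j
    using field unfolding underS_def Field_def by blast
  have "\<exists>U. U \<in> P \<and> (\<forall>l\<in>underS ?r j. S j l \<union> S l j \<subseteq> U)" if j: "j \<in> J" for j
  proof -
    let ?F = "(\<lambda>l. S j l \<union> S l j) ` underS ?r j"
    have "|underS ?r j| <o ?r"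
      by (rule card_of_underS[OF card_of_Card_order]) (use j field in simp)
    then have "|?F| <o ?r"
      by (rule ordLeq_ordLess_trans[OF card_of_image])
    moreover have "?F \<subseteq> P"
      using below j by (auto intro!: Un S)
    ultimately have "has_upper_bound P ?F" by (rule small[rotated])
    then show ?thesis unfolding has_upper_bound_def by (simp add: Bex_def)
  qed
  then obtain U where U: "\<And>j. j \<in> J \<Longrightarrow> U j \<in> P"
    "\<And>j l. j \<in> J \<Longrightarrow> l \<in> underS ?r j \<Longrightarrow> S j l \<union> S l j \<subseteq> U j"
    by metis
  have total: "total_on J ?r"
    using card_of_Well_order[of J] field
    unfolding well_order_on_def linear_order_on_def by simp
  have "U j \<union> S j j \<in> P" if "j \<in> J" for j
    using that by (intro Un U(1) S)
  moreover have "S j l \<subseteq> (U j \<union> S j j) \<union> (U l \<union> S l l)" if jl: "j \<in> J" "l \<in> J" for j l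
  proof (cases "j = l")
    case False
    then have "(l, j) \<in> ?r \<or> (j, l) \<in> ?r"
      using total jl unfolding total_on_def by metis
    then show ?thesis
    proof
      assume "(l, j) \<in> ?r"
      then have "l \<in> underS ?r j" using False by (simp add: underS_I)
      then show ?thesis using U(2)[OF jl(1)] by blast
    next
      assume "(j, l) \<in> ?r"
      then have "j \<in> underS ?r l" using False by (simp add: underS_I)
      then show ?thesis using U(2)[OF jl(2)] by blast
    qed
  qed blast
  ultimately show ?thesis by (intro exI[of _ "\<lambda>j. U j \<union> S j j"] ballI conjI) simp_all
qed

lemma asymp_nbhd_UN_diff:
  assumes b: "ballean X \<E>" and W: "cof_star_witness X \<E> A (f ` J)"
    and Bd: "\<And>j. j \<in> J \<Longrightarrow> bounded_set X \<E> (Bd j)"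
  shows "asymp_nbhd X \<E> (\<Union>j\<in>J. f j `` A - Bd j) A"
  unfolding asymp_nbhd_def
proof
  fix E assume "E \<in> \<E>"
  then obtain j where j: "j \<in> J" "bounded_set X \<E> (E `` A - f j `` A)"
    using W unfolding cof_star_witness_def by blast
  have "E `` A - (\<Union>j\<in>J. f j `` A - Bd j) \<subseteq> (E `` A - f j `` A) \<union> Bd j"
    using j(1) by blast
  then show "bounded_set X \<E> (E `` A - (\<Union>j\<in>J. f j `` A - Bd j))"
    using bounded_set_Un[OF b j(2) Bd[OF j(1)]] bounded_set_subset by blast
qed

lemma asymp_disjoint_separated_by_indexed_witnesses:
  assumes b: "ballean X \<E>" and AB: "asymp_disjoint X \<E> A B"
    and WA: "cof_star_witness X \<E> A (f ` J)" and WB: "cof_star_witness X \<E> B (g ` J)"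
    and small: "\<And>F. F \<subseteq> bornology X \<E> \<Longrightarrow> |F| <o |J| \<Longrightarrow> has_upper_bound (bornology X \<E>) F"
  shows "\<exists>U V. U \<subseteq> X \<and> V \<subseteq> X \<and> asymp_nbhd X \<E> U A \<and> asymp_nbhd X \<E> V B \<and> U \<inter> V = {}"
proof -
  have fg: "f j \<in> \<E>" "g j \<in> \<E>" if "j \<in> J" for j
    using WA WB that unfolding cof_star_witness_def by blast+
  obtain Bd where Bd: "\<And>j. j \<in> J \<Longrightarrow> bounded_set X \<E> (Bd j)"
    "\<And>j l. j \<in> J \<Longrightarrow> l \<in> J \<Longrightarrow> f j `` A \<inter> g l `` B \<subseteq> Bd j \<union> Bd l"
    using exists_diagonal_bounds[of "bornology X \<E>" J "\<lambda>j l. f j `` A \<inter> g l `` B"]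
      small bounded_set_Un[OF b] bounded_set_Image_Int_if_asymp_disjoint[OF b AB] fg
    unfolding bornology_def by (metis mem_Collect_eq)
  let ?U = "\<Union>j\<in>J. f j `` A - Bd j" and ?V = "\<Union>j\<in>J. g j `` B - Bd j"
  have "?U \<subseteq> X" "?V \<subseteq> X"
    using fg ballean_Image_subset[OF b] by blast+
  moreover have "asymp_nbhd X \<E> ?U A"
    by (rule asymp_nbhd_UN_diff[OF b WA]) (rule Bd(1))
  moreover have "asymp_nbhd X \<E> ?V B"
    by (rule asymp_nbhd_UN_diff[OF b WB]) (rule Bd(1))
  moreover have "?U \<inter> ?V = {}"
    using Bd(2) by blast
  ultimately show ?thesis by blast
qed

lemma asymp_disjoint_separated_if_no_largest:
  assumes b: "ballean X \<E>" and cof: "cof_star_le_add X \<E>"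
    and no_largest: "\<not> has_largest (bornology X \<E>)"
    and "A \<subseteq> X" "B \<subseteq> X" and AB: "asymp_disjoint X \<E> A B"
  shows "\<exists>U V. U \<subseteq> X \<and> V \<subseteq> X \<and> asymp_nbhd X \<E> U A \<and> asymp_nbhd X \<E> V B \<and> U \<inter> V = {}"
proof (cases "\<E> = {}")
  case True
  then have "asymp_nbhd X \<E> {} A" "asymp_nbhd X \<E> {} B"
    unfolding asymp_nbhd_def by simp_all
  then show ?thesis by blast
next
  case False
  obtain CA CB where
    CA: "cof_star_witness X \<E> A CA" "card_le_add CA (bornology X \<E>)" and
    CB: "cof_star_witness X \<E> B CB" "card_le_add CB (bornology X \<E>)"
    using cof \<open>A \<subseteq> X\<close> \<open>B \<subseteq> X\<close> unfolding cof_star_le_add_def by meson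
  from False have "CA \<noteq> {}" "CB \<noteq> {}"
    using CA(1) CB(1) unfolding cof_star_witness_def by blast+
  then obtain J f g where J: "J = CA \<or> J = CB" "f ` J = CA" "g ` J = CB"
    by (metis exists_common_surjective_index)
  then have "card_le_add J (bornology X \<E>)" using CA(2) CB(2) by blast
  then have small: "has_upper_bound (bornology X \<E>) F"
    if "F \<subseteq> bornology X \<E>" "|F| <o |J|" for F
    using has_upper_bound_if_card_less_add no_largest that by blast
  have "cof_star_witness X \<E> A (f ` J)" "cof_star_witness X \<E> B (g ` J)"
    using CA(1) CB(1) J(2,3) by simp_all
  then show ?thesis
    by (rule asymp_disjoint_separated_by_indexed_witnesses[OF b AB _ _ small])
qed

theorem theorem1p2:
  fixes X :: "'a set" and \<E> :: "('a \<times> 'a) set set"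
  assumes "ballean X \<E>"
    and "cof_star_le_add X \<E>"
  shows "normal_ballean X \<E>"
proof (cases "has_largest (bornology X \<E>)")
  case True
  then show ?thesis
    by (intro normal_ballean_if_bounded_carrier[OF assms(1)] bounded_carrier_if_has_largest[OF assms(1)])
next
  case False
  then show ?thesis
    unfolding normal_ballean_def
    by (intro allI impI asymp_disjoint_separated_if_no_largest[OF assms])
qed

end
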